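(* Let $R>0$ and $s\in\{-R,\,iR\}$. Then the Voiculescu transform of $a^{1/2}_s$ is $\phi_{a^{1/2}_s}(z)=2isz^{1/2}-s^2$; consequently $a^{1/2}_{-R}$ and $a^{1/2}_{iR}$ are freely $\tfrac12$-stable but not strictly freely stable.
   Context: For $w\in\mathbb{C}\setminus[0,\infty)$ and $p\in\{\alpha,1/\alpha\}$, $w^p:=e^{p\log_{(1)}w}$ with $\operatorname{Im}\log_{(1)}w\in(0,2\pi)$; $(-1)^{\alpha-1}:=e^{i(\alpha-1)\pi}$. For $0<\alpha\le1$ and $(1-\alpha)\pi\le\arg s\le\pi$, the monotone $\alpha$-stable law $a^\alpha_s$ is the probability measure on $\mathbb{R}$ with reciprocal Cauchy transform $F_{a^\alpha_s}(z)=1/\int\frac{a^\alpha_s(dx)}{z-x}=(z^\alpha+(-1)^{\alpha-1}s)^{1/\alpha}$ on $\mathbb{C}_+$ (so $F_{a^{1/2}_s}(z)=(z^{1/2}-is)^2$). For a probability measure $\mu$, $F_\mu=1/G_\mu$ is univalent on a truncated cone $\Gamma_{\eta,M}=\{\operatorname{Im}z>M,\ \operatorname{Im}z>\eta|\operatorname{Re}z|\}$ whose image contains another such cone; the Voiculescu transform is $\phi_\mu(z)=F_\mu^{-1}(z)-z$ on that cone. A probability measure is freely $\tfrac12$-stable iff $\phi_\mu(z)=bz^{1/2}+c$ with $c\in\mathbb{R}$ and $\arg b\in[\pi,3\pi/2]$, and strictly freely $\tfrac12$-stable iff moreover $c=0$. *)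

theory Defs
  imports "HOL-Probability.Probability"
begin

text \<open>Branch of the logarithm with imaginary part in (0, 2 pi), on C minus [0,inf).
  For w not in [0,inf), -w is not in (-inf,0], so Im (Ln (-w)) lies in (-pi,pi).\<close>
definition log1 :: "complex \<Rightarrow> complex" where
  "log1 w = Ln (- w) + \<i> * of_real pi"

definition cpow1 :: "real \<Rightarrow> complex \<Rightarrow> complex" where
  "cpow1 p w = exp (of_real p * log1 w)"

definition cauchy_transform :: "real measure \<Rightarrow> complex \<Rightarrow> complex" where
  "cauchy_transform \<mu> z = (\<integral>x. 1 / (z - of_real x) \<partial>\<mu>)"

definition recip_cauchy :: "real measure \<Rightarrow> complex \<Rightarrow> complex" where
  "recip_cauchy \<mu> z = 1 / cauchy_transform \<mu> z"

definition real_prob :: "real measure \<Rightarrow> bool" where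
  "real_prob \<mu> \<longleftrightarrow> prob_space \<mu> \<and> sets \<mu> = sets borel"

text \<open>The monotone alpha-stable law a^alpha_s: the probability measure whose reciprocal
  Cauchy transform is (z^alpha + (-1)^(alpha-1) s)^(1/alpha) on the upper half-plane.\<close>
definition monotone_stable_law :: "real \<Rightarrow> complex \<Rightarrow> real measure \<Rightarrow> bool" where
  "monotone_stable_law \<alpha> s \<mu> \<longleftrightarrow> real_prob \<mu> \<and>
     (\<forall>z. Im z > 0 \<longrightarrow> recip_cauchy \<mu> z =
        cpow1 (1 / \<alpha>) (cpow1 \<alpha> z + exp (\<i> * of_real ((\<alpha> - 1) * pi)) * s))"

definition tcone :: "real \<Rightarrow> real \<Rightarrow> complex set" where
  "tcone \<eta> M = {z. Im z > M \<and> Im z > \<eta> * \<bar>Re z\<bar>}"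

definition voiculescu_eq :: "real measure \<Rightarrow> (complex \<Rightarrow> complex) \<Rightarrow> bool" where
  "voiculescu_eq \<mu> g \<longleftrightarrow>
     (\<exists>\<eta> M \<eta>' M'. \<eta> > 0 \<and> M > 0 \<and> \<eta>' > 0 \<and> M' > 0 \<and>
        inj_on (recip_cauchy \<mu>) (tcone \<eta> M) \<and>
        tcone \<eta>' M' \<subseteq> recip_cauchy \<mu> ` tcone \<eta> M \<and>
        (\<forall>z\<in>tcone \<eta>' M'. inv_into (tcone \<eta> M) (recip_cauchy \<mu>) z - z = g z))"

definition arg_in_third :: "complex \<Rightarrow> bool" where
  "arg_in_third b \<longleftrightarrow> b \<noteq> 0 \<and>
     (\<exists>\<theta>. pi \<le> \<theta> \<and> \<theta> \<le> 3 * pi / 2 \<and> b = of_real (cmod b) * exp (\<i> * of_real \<theta>))"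

definition freely_half_stable :: "real measure \<Rightarrow> bool" where
  "freely_half_stable \<mu> \<longleftrightarrow> real_prob \<mu> \<and>
     (\<exists>b c. c \<in> \<real> \<and> arg_in_third b \<and> voiculescu_eq \<mu> (\<lambda>z. b * cpow1 (1/2) z + c))"

definition strictly_freely_half_stable :: "real measure \<Rightarrow> bool" where
  "strictly_freely_half_stable \<mu> \<longleftrightarrow> real_prob \<mu> \<and>
     (\<exists>b. arg_in_third b \<and> voiculescu_eq \<mu> (\<lambda>z. b * cpow1 (1/2) z))"

end

theory Submission
  imports Defs
begin

text \<open>
  Write \<open>\<surd>z\<close> for \<open>cpow1 (1/2) z\<close>.  On the upper half-plane \<open>\<surd>\<close> is the
  square root with values in the open first quadrant, and for \<open>\<alpha> = 1/2\<close> the defining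
  identity of the monotone stable law reads \<open>F(z) = (\<surd>z - \<i>s)\<^sup>2\<close>, where \<open>F\<close> is the
  reciprocal Cauchy transform.  For \<open>s \<in> {-R, \<i>R}\<close> the shift \<open>u \<mapsto> u - \<i>s\<close> moves the
  first quadrant into itself, so \<open>F\<close> is injective on the upper half-plane, and its inverse
  is \<open>w \<mapsto> (\<surd>w + \<i>s)\<^sup>2\<close>, giving \<open>F\<^sup>-\<^sup>1(w) - w = 2\<i>s\<surd>w - s\<^sup>2\<close>.  The only real work is
  to check that this inverse maps a truncated cone into another one (an elementary
  estimate on the shifted square root).

  The theorem then
  follows: the transform is \<open>2\<i>s\<surd>z - s\<^sup>2\<close> with \<open>-s\<^sup>2\<close> real and \<open>arg (2\<i>s) \<in> {3\<pi>/2, \<pi>}\<close>,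
  while a transform of the form \<open>b\<surd>z\<close> would force \<open>s\<^sup>2 = 0\<close>.
\<close>

section \<open>The square root on the upper half-plane\<close>

lemma sqrt_upper_half_plane:
  assumes "Im w > 0"
  shows "(cpow1 (1/2) w)\<^sup>2 = w" "Re (cpow1 (1/2) w) > 0" "Im (cpow1 (1/2) w) > 0"
proof -
  have w0: "- w \<noteq> 0" using assms by auto
  have exp_log1: "exp (log1 w) = w" unfolding log1_def using w0 by (simp add: exp_add)
  have "(cpow1 (1/2) w)\<^sup>2 = exp (of_real (1/2) * log1 w + of_real (1/2) * log1 w)"
    unfolding cpow1_def by (simp only: power2_eq_square exp_add)
  also have "of_real (1/2) * log1 w + of_real (1/2) * log1 w = log1 w" by simp
  finally show "(cpow1 (1/2) w)\<^sup>2 = w" using exp_log1 by simp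
  have "Im (Ln (-w)) < 0"
    using assms Im_Ln_pos_le[OF w0] Im_Ln_le_pi[OF w0] by auto
  moreover have "- pi < Im (Ln (-w))" using mpi_less_Im_Ln[OF w0] .
  ultimately have angle: "0 < Im (log1 w) / 2" "Im (log1 w) / 2 < pi/2"
    unfolding log1_def by auto
  have "cos (Im (log1 w) / 2) > 0" using angle by (intro cos_gt_zero_pi) auto
  then show "Re (cpow1 (1/2) w) > 0" unfolding cpow1_def Re_exp by simp
  have "sin (Im (log1 w) / 2) > 0" using angle by (intro sin_gt_zero) auto
  then show "Im (cpow1 (1/2) w) > 0" unfolding cpow1_def Im_exp by simp
qed

lemma sqrt_of_square:
  assumes "Re v > 0" "Im v > 0"
  shows "cpow1 (1/2) (v\<^sup>2) = v"
proof -
  define u where "u = cpow1 (1/2) (v\<^sup>2)"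
  have "Im (v\<^sup>2) > 0" using assms by (simp add: power2_eq_square)
  then have u: "u\<^sup>2 = v\<^sup>2" "Re u > 0" unfolding u_def using sqrt_upper_half_plane by blast+
  have "(u - v) * (u + v) = 0" using u(1) by (simp add: power2_eq_square algebra_simps)
  moreover have "Re (u + v) \<noteq> 0" using u(2) assms by simp
  ultimately have "u - v = 0" by (metis mult_eq_0_iff zero_complex.sel(1))
  then show ?thesis unfolding u_def by simp
qed

lemma sqrt_upper_inj:
  assumes "Im z1 > 0" "Im z2 > 0" "cpow1 (1/2) z1 = cpow1 (1/2) z2"
  shows "z1 = z2"
proof -
  have "z1 = (cpow1 (1/2) z1)\<^sup>2" using sqrt_upper_half_plane(1)[OF assms(1)] by simp
  also have "\<dots> = z2" using sqrt_upper_half_plane(1)[OF assms(2)] assms(3) by simp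
  finally show ?thesis .
qed

lemma sqrt_scale:
  assumes "Im w > 0" "r > 0"
  shows "cpow1 (1/2) (of_real (r\<^sup>2) * w) = of_real r * cpow1 (1/2) w"
proof -
  have "of_real (r\<^sup>2) * w = (of_real r * cpow1 (1/2) w)\<^sup>2"
    using sqrt_upper_half_plane(1)[OF assms(1)] by (simp add: power_mult_distrib)
  moreover have "Re (of_real r * cpow1 (1/2) w) > 0" "Im (of_real r * cpow1 (1/2) w) > 0"
    using sqrt_upper_half_plane(2,3)[OF assms(1)] assms(2) by simp_all
  ultimately show ?thesis by (simp only: sqrt_of_square)
qed

lemma cpow1_two:
  assumes "w \<noteq> 0"
  shows "cpow1 2 w = w\<^sup>2"
proof -
  have exp_log1: "exp (log1 w) = w" unfolding log1_def using assms by (simp add: exp_add)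
  have "cpow1 2 w = exp (log1 w + log1 w)" unfolding cpow1_def by (simp only: of_real_numeral mult_2)
  also have "\<dots> = w\<^sup>2" by (simp only: exp_add exp_log1 power2_eq_square)
  finally show ?thesis .
qed

text \<open>A function of the form \<open>a\<surd>z - c\<close> agrees with \<open>b\<surd>z\<close> high up on the imaginary axis only
  if \<open>c = 0\<close>: compare the values at \<open>\<i>T\<close> and \<open>4\<i>T\<close>, where \<open>\<surd>\<close> doubles.\<close>
lemma sqrt_affine_eq_on_axis:
  assumes "\<forall>t>M. a * cpow1 (1/2) (\<i> * of_real t) - c = b * cpow1 (1/2) (\<i> * of_real t)"
  shows "c = 0"
proof -
  define T where "T = \<bar>M\<bar> + 1"
  define r where "r = cpow1 (1/2) (\<i> * of_real T)"
  have T: "T > M" "T > 0" unfolding T_def by auto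
  have "cpow1 (1/2) (\<i> * of_real (4 * T)) = cpow1 (1/2) (of_real (2\<^sup>2) * (\<i> * of_real T))"
    by (simp add: algebra_simps)
  also have "\<dots> = 2 * r" unfolding r_def using T(2) by (subst sqrt_scale) auto
  finally have r4: "cpow1 (1/2) (\<i> * of_real (4 * T)) = 2 * r" .
  have at_T: "a * r - c = b * r" using assms T(1) unfolding r_def by blast
  have "4 * T > M" using T by linarith
  then have at_4T: "a * (2 * r) - c = b * (2 * r)" using assms r4 by metis
  have "- c = 2 * (a * r - c) - (a * (2 * r) - c)" by (simp add: algebra_simps)
  also have "\<dots> = 2 * (b * r) - b * (2 * r)" unfolding at_T at_4T ..
  also have "\<dots> = 0" by simp
  finally show ?thesis by simp
qed

section \<open>The Voiculescu transform\<close>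

lemma tcone_upper: "M \<ge> 0 \<Longrightarrow> z \<in> tcone \<eta> M \<Longrightarrow> Im z > 0"
  unfolding tcone_def by auto

lemma voiculescu_eqI:
  assumes "\<eta> > 0" "M > 0" "\<eta>' > 0" "M' > 0"
    and inj: "inj_on (recip_cauchy \<mu>) (tcone \<eta> M)"
    and preimage: "\<And>w. w \<in> tcone \<eta>' M' \<Longrightarrow>
                     \<exists>z\<in>tcone \<eta> M. recip_cauchy \<mu> z = w \<and> z - w = g w"
  shows "voiculescu_eq \<mu> g"
  unfolding voiculescu_eq_def
proof (intro exI conjI ballI)
  show "tcone \<eta>' M' \<subseteq> recip_cauchy \<mu> ` tcone \<eta> M" using preimage by blast
  fix w assume "w \<in> tcone \<eta>' M'"
  then obtain z where "z \<in> tcone \<eta> M" "recip_cauchy \<mu> z = w" "z - w = g w"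
    using preimage by blast
  then show "inv_into (tcone \<eta> M) (recip_cauchy \<mu>) w - w = g w"
    using inv_into_f_eq[OF inj] by simp
qed (use assms in auto)

lemma voiculescu_eq_on_axis:
  assumes "voiculescu_eq \<mu> g"
  shows "\<exists>M>0. \<forall>t>M. \<exists>z. Im z > 0 \<and> recip_cauchy \<mu> z = \<i> * of_real t \<and> z - \<i> * of_real t = g (\<i> * of_real t)"
proof -
  obtain \<eta> M \<eta>' M' where cones: "M > 0" "M' > 0" "\<eta>' > 0"
    "tcone \<eta>' M' \<subseteq> recip_cauchy \<mu> ` tcone \<eta> M"
    "\<forall>w\<in>tcone \<eta>' M'. inv_into (tcone \<eta> M) (recip_cauchy \<mu>) w - w = g w"
    using assms unfolding voiculescu_eq_def by blast
  have "\<exists>z. Im z > 0 \<and> recip_cauchy \<mu> z = \<i> * of_real t \<and> z - \<i> * of_real t = g (\<i> * of_real t)"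
    if "t > M'" for t
  proof -
    define w where "w = \<i> * of_real t"
    have w: "w \<in> tcone \<eta>' M'" using that cones unfolding w_def tcone_def by auto
    then have "w \<in> recip_cauchy \<mu> ` tcone \<eta> M" using cones(4) by blast
    then have "inv_into (tcone \<eta> M) (recip_cauchy \<mu>) w \<in> tcone \<eta> M"
      "recip_cauchy \<mu> (inv_into (tcone \<eta> M) (recip_cauchy \<mu>) w) = w"
      by (auto intro: inv_into_into f_inv_into_f)
    then show ?thesis
      using cones(1,5) w tcone_upper[of M] unfolding w_def[symmetric] by (metis less_imp_le)
  qed
  then show ?thesis using cones(2) by blast
qed

lemma voiculescu_eq_unique_on_axis:
  assumes inj: "inj_on (recip_cauchy \<mu>) {z. Im z > 0}"
    and "voiculescu_eq \<mu> g1" "voiculescu_eq \<mu> g2"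
  shows "\<exists>M. \<forall>t>M. g1 (\<i> * of_real t) = g2 (\<i> * of_real t)"
proof -
  obtain M1 M2 where
    "\<forall>t>M1. \<exists>z. Im z > 0 \<and> recip_cauchy \<mu> z = \<i> * of_real t \<and> z - \<i> * of_real t = g1 (\<i> * of_real t)"
    "\<forall>t>M2. \<exists>z. Im z > 0 \<and> recip_cauchy \<mu> z = \<i> * of_real t \<and> z - \<i> * of_real t = g2 (\<i> * of_real t)"
    using voiculescu_eq_on_axis assms(2,3) by metis
  then have "g1 (\<i> * of_real t) = g2 (\<i> * of_real t)" if "t > max M1 M2" for t
    using that inj_onD[OF inj] by (smt (verit) mem_Collect_eq)
  then show ?thesis by blast
qed

section \<open>The cone estimate\<close>

text \<open>Real form of the estimate: if \<open>(a + \<i>b)\<^sup>2\<close> lies in the cone \<open>Im > |Re|\<close> and above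
  height \<open>200R\<^sup>2\<close>, then \<open>a\<close> and \<open>b\<close> are comparable and large against \<open>R\<close>, so that
  \<open>(a + \<i>(b - R))\<^sup>2\<close> lies in the cone \<open>Im > |Re|/2\<close> above height \<open>R\<^sup>2\<close>.\<close>
lemma cone_shift_estimate:
  fixes a b R :: real
  assumes a: "a > 0" and b: "b > 0" and R: "R > 0"
    and cone: "2*a*b > \<bar>a\<^sup>2 - b\<^sup>2\<bar>" and high: "2*a*b > 200*R\<^sup>2"
  shows "b > R" "2*a*(b-R) > R\<^sup>2" "2*a*(b-R) > 1/2 * \<bar>a\<^sup>2 - (b-R)\<^sup>2\<bar>"
proof -
  have comparable: "x < 3*y" if "x > 0" "y > 0" "2*x*y > \<bar>x\<^sup>2 - y\<^sup>2\<bar>" for x y :: real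
  proof (rule ccontr)
    assume "\<not> x < 3*y"
    then have "x*(x-2*y) \<ge> x*y" "x*y \<ge> 3*y*y" using that by (auto intro: mult_left_mono mult_right_mono)
    then have "x\<^sup>2 - y\<^sup>2 - 2*x*y \<ge> 2*y*y" by (simp add: power2_eq_square algebra_simps)
    then show False using that by (smt (verit) mult_pos_pos)
  qed
  have a3: "a*b < 3*(b*b)" using comparable[OF a b cone] b by simp
  have b3: "a*b < 3*(a*a)" using comparable[OF b a] cone a by (simp add: abs_minus_commute mult.commute)
  have large: "x > 5*R" if "x > 0" "a*b < 3*(x*x)" for x
  proof (rule ccontr)
    assume "\<not> x > 5*R"
    then have "x*x \<le> (5*R)*(5*R)" using that(1) by (intro mult_mono) auto
    then have "x*x \<le> 25*(R*R)" by simp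
    moreover have "100*(R*R) < a*b" using high by (simp add: power2_eq_square)
    moreover have "R*R > 0" using R by simp
    ultimately show False using that(2) by linarith
  qed
  have b5: "b > 5*R" using large[OF b a3] .
  have a5: "a > 5*R" using large[OF a b3] .
  have aR: "a*R < a*b/5" and bR: "b*R < a*b/5" using a5 b5 a b by (simp_all add: mult.commute)
  have "R*R < (a/5)*(b/5)" using a5 b5 R by (intro mult_strict_mono) auto
  then have RR: "R*R < a*b/25" by simp
  have "a\<^sup>2 - (b-R)\<^sup>2 = (a\<^sup>2 - b\<^sup>2) + 2*(b*R) - R*R" by (simp add: power2_eq_square algebra_simps)
  then have deviation: "\<bar>a\<^sup>2 - (b-R)\<^sup>2\<bar> \<le> \<bar>a\<^sup>2 - b\<^sup>2\<bar> + 2*(b*R) + R*R"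
    using mult_pos_pos[OF b R] mult_pos_pos[OF R R] by linarith
  have expand: "2*a*(b-R) = 2*(a*b) - 2*(a*R)" by (simp add: algebra_simps)
  have linear: "\<And>X Y P Q T S :: real. 0 \<le> Y \<Longrightarrow> X \<le> Y + 2*T + S \<Longrightarrow> Y < 2*P \<Longrightarrow> Q < P/5 \<Longrightarrow>
      T < P/5 \<Longrightarrow> S < P/25 \<Longrightarrow> 1/2*X < 2*P - 2*Q"
    by linarith
  show "2*a*(b-R) > 1/2 * \<bar>a\<^sup>2 - (b-R)\<^sup>2\<bar>"
    unfolding expand using linear[OF abs_ge_zero deviation cone[unfolded mult.assoc] aR bR RR] .
  show "2*a*(b-R) > R\<^sup>2" using aR RR mult_pos_pos[OF R R] unfolding expand power2_eq_square by linarith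
  show "b > R" using b5 R by simp
qed

text \<open>The case \<open>s = \<i>R\<close> is the case \<open>s = -R\<close> with real and imaginary
  parts exchanged.\<close>
lemma shifted_square_in_cone:
  assumes R: "R > 0" and s: "s = - of_real R \<or> s = \<i> * of_real R"
    and u: "Re u > 0" "Im u > 0" and cone: "u\<^sup>2 \<in> tcone 1 (200*R\<^sup>2)"
  shows "Re (u + \<i> * s) > 0 \<and> Im (u + \<i> * s) > 0 \<and> (u + \<i> * s)\<^sup>2 \<in> tcone (1/2) (R\<^sup>2)"
proof -
  define v where "v = u + \<i> * s"
  have hyp: "2 * Re u * Im u > \<bar>(Re u)\<^sup>2 - (Im u)\<^sup>2\<bar>" "2 * Re u * Im u > 200 * R\<^sup>2"
    using cone by (auto simp: tcone_def Re_power2 Im_power2)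
  have "Re v > 0 \<and> Im v > 0 \<and> 2 * Re v * Im v > R\<^sup>2
        \<and> 2 * Re v * Im v > 1/2 * \<bar>(Re v)\<^sup>2 - (Im v)\<^sup>2\<bar>"
    using s
  proof
    assume "s = - of_real R"
    then have "Re v = Re u" "Im v = Im u - R" unfolding v_def by simp_all
    then show ?thesis using cone_shift_estimate[OF u R hyp] u by simp
  next
    assume "s = \<i> * of_real R"
    then have v: "Re v = Re u - R" "Im v = Im u" unfolding v_def by simp_all
    have "2 * Im u * Re u > \<bar>(Im u)\<^sup>2 - (Re u)\<^sup>2\<bar>" "2 * Im u * Re u > 200 * R\<^sup>2"
      using hyp by (simp_all add: abs_minus_commute mult.commute mult.left_commute)
    note est = cone_shift_estimate[OF u(2,1) R this]
    have "2 * Re v * Im v = 2 * Im u * (Re u - R)" using v by simp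
    moreover have "\<bar>(Re v)\<^sup>2 - (Im v)\<^sup>2\<bar> = \<bar>(Im u)\<^sup>2 - (Re u - R)\<^sup>2\<bar>"
      using v by (simp add: abs_minus_commute)
    ultimately show ?thesis using est u v by (simp only:) simp
  qed
  then show ?thesis unfolding v_def[symmetric] by (auto simp: tcone_def Re_power2 Im_power2)
qed

section \<open>The monotone \<open>1/2\<close>-stable law\<close>

lemma exp_half_minus_one_pi: "exp (\<i> * of_real ((1/2 - 1) * pi)) = - \<i>"
proof -
  have "exp (\<i> * of_real ((1/2 - 1) * pi)) = cis (- (pi/2))"
    by (simp add: cis_conv_exp)
  also have "\<dots> = - \<i>" by (simp add: complex_eq_iff)
  finally show ?thesis .
qed

lemma half_stable_recip_cauchy:
  assumes R: "R > 0" and s: "s = - of_real R \<or> s = \<i> * of_real R"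
    and law: "monotone_stable_law (1/2) s \<mu>" and z: "Im z > 0"
  shows "recip_cauchy \<mu> z = (cpow1 (1/2) z - \<i> * s)\<^sup>2"
    "Re (cpow1 (1/2) z - \<i> * s) > 0" "Im (cpow1 (1/2) z - \<i> * s) > 0"
proof -
  show quadrant: "Re (cpow1 (1/2) z - \<i> * s) > 0" "Im (cpow1 (1/2) z - \<i> * s) > 0"
    using sqrt_upper_half_plane[OF z] s R by auto
  have "recip_cauchy \<mu> z = cpow1 (1/(1/2)) (cpow1 (1/2) z + exp (\<i> * of_real ((1/2 - 1) * pi)) * s)"
    using law z unfolding monotone_stable_law_def by blast
  also have "\<dots> = cpow1 2 (cpow1 (1/2) z - \<i> * s)" unfolding exp_half_minus_one_pi by simp
  also have "\<dots> = (cpow1 (1/2) z - \<i> * s)\<^sup>2" using quadrant by (intro cpow1_two) auto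
  finally show "recip_cauchy \<mu> z = (cpow1 (1/2) z - \<i> * s)\<^sup>2" .
qed

text \<open>Hence \<open>F\<close> is injective on the upper half-plane: \<open>\<surd>\<close> undoes the square on the first
  quadrant, and \<open>\<surd>\<close> itself is injective on the upper half-plane.\<close>
lemma half_stable_recip_cauchy_inj:
  assumes R: "R > 0" and s: "s = - of_real R \<or> s = \<i> * of_real R"
    and law: "monotone_stable_law (1/2) s \<mu>"
  shows "inj_on (recip_cauchy \<mu>) {z. Im z > 0}"
proof (rule inj_onI)
  fix z1 z2 assume z: "z1 \<in> {z. Im z > 0}" "z2 \<in> {z. Im z > 0}"
    and eq: "recip_cauchy \<mu> z1 = recip_cauchy \<mu> z2"
  note F = half_stable_recip_cauchy[OF R s law]
  have "cpow1 (1/2) z1 - \<i> * s = cpow1 (1/2) ((cpow1 (1/2) z1 - \<i> * s)\<^sup>2)"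
    using F(2,3) z(1) by (simp add: sqrt_of_square)
  also have "\<dots> = cpow1 (1/2) ((cpow1 (1/2) z2 - \<i> * s)\<^sup>2)" using F(1) z eq by simp
  also have "\<dots> = cpow1 (1/2) z2 - \<i> * s" using F(2,3) z(2) by (simp add: sqrt_of_square)
  finally show "z1 = z2" using sqrt_upper_inj z by simp
qed

text \<open>The Voiculescu transform of \<open>a\<^sup>1\<^sup>/\<^sup>2\<^sub>s\<close>: the preimage of \<open>w\<close> is \<open>(\<surd>w + \<i>s)\<^sup>2\<close>, and
  \<open>(\<surd>w + \<i>s)\<^sup>2 - w = 2\<i>s\<surd>w - s\<^sup>2\<close>.\<close>
lemma half_stable_voiculescu:
  assumes R: "R > 0" and s: "s = - of_real R \<or> s = \<i> * of_real R"
    and law: "monotone_stable_law (1/2) s \<mu>"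
  shows "voiculescu_eq \<mu> (\<lambda>z. 2 * \<i> * s * cpow1 (1/2) z - s ^ 2)"
proof (rule voiculescu_eqI)
  show "(1/2::real) > 0" "R\<^sup>2 > 0" "(1::real) > 0" "200 * R\<^sup>2 > 0" using R by auto
  have "tcone (1/2) (R\<^sup>2) \<subseteq> {z. Im z > 0}" using tcone_upper[of "R\<^sup>2"] by auto
  then show "inj_on (recip_cauchy \<mu>) (tcone (1/2) (R\<^sup>2))"
    using inj_on_subset[OF half_stable_recip_cauchy_inj[OF R s law]] by blast
  fix w assume w: "w \<in> tcone 1 (200 * R\<^sup>2)"
  define u where "u = cpow1 (1/2) w"
  define z where "z = (u + \<i> * s)\<^sup>2"
  have u: "u\<^sup>2 = w" "Re u > 0" "Im u > 0"
    using sqrt_upper_half_plane tcone_upper[OF _ w] unfolding u_def by auto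
  note shifted = shifted_square_in_cone[OF R s u(2,3), unfolded u(1), OF w]
  have z_cone: "z \<in> tcone (1/2) (R\<^sup>2)" using shifted u(1) unfolding z_def by simp
  have sqrt_z: "cpow1 (1/2) z = u + \<i> * s" unfolding z_def using shifted by (intro sqrt_of_square) auto
  have "recip_cauchy \<mu> z = (cpow1 (1/2) z - \<i> * s)\<^sup>2"
    using half_stable_recip_cauchy(1)[OF R s law] tcone_upper[OF _ z_cone] by simp
  also have "\<dots> = w" using sqrt_z u(1) by simp
  finally have "recip_cauchy \<mu> z = w" .
  moreover have "z - w = 2 * \<i> * s * cpow1 (1/2) w - s ^ 2"
  proof -
    have "z - w = (u + \<i> * s)\<^sup>2 - u\<^sup>2" unfolding z_def u(1) ..
    then show ?thesis unfolding u_def[symmetric] by (simp add: power2_eq_square algebra_simps)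
  qed
  ultimately show "\<exists>z\<in>tcone (1/2) (R\<^sup>2). recip_cauchy \<mu> z = w \<and> z - w = 2 * \<i> * s * cpow1 (1/2) w - s ^ 2"
    using z_cone by blast
qed

lemma arg_in_third_polar:
  assumes "r > 0" "pi \<le> \<theta>" "\<theta> \<le> 3 * pi / 2"
  shows "arg_in_third (of_real r * exp (\<i> * of_real \<theta>))"
  unfolding arg_in_third_def using assms by (auto simp: norm_mult)

lemma arg_in_third_coefficient:
  assumes R: "R > 0" and s: "s = - of_real R \<or> s = \<i> * of_real R"
  shows "arg_in_third (2 * \<i> * s)"
  using s
proof
  assume "s = - of_real R"
  moreover have "exp (\<i> * of_real (3/2 * pi)) = cis (3/2 * pi)" unfolding cis_conv_exp by simp
  moreover have "cis (3/2 * pi) = - \<i>"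
    by (rule complex_eqI) (use cos_3over2_pi sin_3over2_pi in simp_all)
  ultimately have "2 * \<i> * s = of_real (2 * R) * exp (\<i> * of_real (3/2 * pi))" by simp
  then show ?thesis by (simp only:) (rule arg_in_third_polar, use R in auto)
next
  assume "s = \<i> * of_real R"
  moreover have "exp (\<i> * of_real pi) = cis pi" unfolding cis_conv_exp by simp
  moreover have "cis pi = - 1" by (simp add: complex_eq_iff)
  ultimately have "2 * \<i> * s = of_real (2 * R) * exp (\<i> * of_real pi)" by simp
  then show ?thesis by (simp only:) (rule arg_in_third_polar, use R in auto)
qed

theorem mainTheorem5:
  fixes R :: real and s :: complex and \<mu> :: "real measure"
  assumes "R > 0"
    and "s = - of_real R \<or> s = \<i> * of_real R"
    and "monotone_stable_law (1/2) s \<mu>"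
  shows "voiculescu_eq \<mu> (\<lambda>z. 2 * \<i> * s * cpow1 (1/2) z - s ^ 2)
         \<and> freely_half_stable \<mu> \<and> \<not> strictly_freely_half_stable \<mu>"
proof (intro conjI)
  show transform: "voiculescu_eq \<mu> (\<lambda>z. 2 * \<i> * s * cpow1 (1/2) z - s ^ 2)"
    by (rule half_stable_voiculescu[OF assms])
  have real_law: "real_prob \<mu>" using assms(3) unfolding monotone_stable_law_def by blast
  have "s\<^sup>2 = of_real (R\<^sup>2) \<or> s\<^sup>2 = - of_real (R\<^sup>2)" using assms(2) by (auto simp: power_mult_distrib)
  then have real_shift: "- s\<^sup>2 \<in> \<real>" by auto
  have "(\<lambda>z. 2 * \<i> * s * cpow1 (1/2) z + - s\<^sup>2) = (\<lambda>z. 2 * \<i> * s * cpow1 (1/2) z - s ^ 2)"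
    by simp
  then show "freely_half_stable \<mu>"
    unfolding freely_half_stable_def
    using real_law real_shift arg_in_third_coefficient[OF assms(1,2)] transform by metis
  show "\<not> strictly_freely_half_stable \<mu>"
  proof
    assume "strictly_freely_half_stable \<mu>"
    then obtain b where "voiculescu_eq \<mu> (\<lambda>z. b * cpow1 (1/2) z)"
      unfolding strictly_freely_half_stable_def by blast
    then obtain M where
      "\<forall>t>M. 2 * \<i> * s * cpow1 (1/2) (\<i> * of_real t) - s\<^sup>2 = b * cpow1 (1/2) (\<i> * of_real t)"
      using voiculescu_eq_unique_on_axis[OF half_stable_recip_cauchy_inj[OF assms] transform] by blast
    then have "s\<^sup>2 = 0" by (rule sqrt_affine_eq_on_axis)
    then show False using assms(1,2) by auto
  qed
qed

end
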